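(* Let $u,v\in S_n$. Then $C(v)\subseteq C(u)$ (i.e. $u\le v$ in the shard intersection order) if and only if both of the following hold: (Refinement) the set partition of $\{1,\dots,n\}$ into blocks of $u$ refines the set partition into blocks of $v$; (Consistency) whenever $i<k<j$, $i$ and $j$ lie in the same block of $u$, and $k$ does not lie in that block of $u$, then either $k$ lies in the same block of $v$ as $i$ and $j$, or $k$ lies on the same side (left or right) of $i$ in $v$ as it does in $u$.
   Context: For $w=w(1)\cdots w(n)\in S_n$ (one-line notation), the blocks of $w$ are the sets of letters of its maximal decreasing runs (maximal consecutive factors $w(a)>w(a+1)>\cdots>w(b)$). Let $V=\{x\in\mathbb R^n:\sum_i x_i=0\}$. The cone $C(w)\subseteq V$ is the set of $x\in V$ such that: (i) $x_i=x_j$ whenever $i,j$ lie in the same block of $w$; (ii) whenever $i<k<j$ with $i,j$ in the same block and $k$ not in that block, $x_k\le x_i$ if $k$ appears to the left of $i$ in $w$, and $x_i\le x_k$ if $k$ appears to the right of $i$ in $w$. The shard intersection order on $S_n$: $u\le v$ iff $C(v)\subseteq C(u)$. *)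

theory Defs
  imports "HOL-Combinatorics.Permutations" Complex_Main
begin

text \<open>A permutation w of S_n is represented by a function w :: nat => nat with
  w permutes {1..n}; w p is the letter at position p (one-line notation
  w(1) ... w(n)).\<close>

definition pos :: "(nat \<Rightarrow> nat) \<Rightarrow> nat \<Rightarrow> nat" where
  "pos w i = inv w i"

definition max_dec_run :: "nat \<Rightarrow> (nat \<Rightarrow> nat) \<Rightarrow> nat \<Rightarrow> nat \<Rightarrow> bool" where
  "max_dec_run n w a b \<longleftrightarrow>
     1 \<le> a \<and> a \<le> b \<and> b \<le> n \<and>
     (\<forall>p. a \<le> p \<and> p < b \<longrightarrow> w p > w (p + 1)) \<and>
     (a = 1 \<or> w (a - 1) < w a) \<and>
     (b = n \<or> w b < w (b + 1))"

definition blocks :: "nat \<Rightarrow> (nat \<Rightarrow> nat) \<Rightarrow> nat set set" where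
  "blocks n w = {w ` {a..b} | a b. max_dec_run n w a b}"

definition left_of :: "(nat \<Rightarrow> nat) \<Rightarrow> nat \<Rightarrow> nat \<Rightarrow> bool" where
  "left_of w k i \<longleftrightarrow> pos w k < pos w i"

text \<open>V = {x in R^n. sum x_i = 0}, with vectors in R^n represented as
  functions nat => real vanishing outside {1..n}.\<close>
definition V :: "nat \<Rightarrow> (nat \<Rightarrow> real) set" where
  "V n = {x. (\<forall>i. i \<notin> {1..n} \<longrightarrow> x i = 0) \<and> (\<Sum>i\<in>{1..n}. x i) = 0}"

definition cone :: "nat \<Rightarrow> (nat \<Rightarrow> nat) \<Rightarrow> (nat \<Rightarrow> real) set" where
  "cone n w = {x \<in> V n.
     (\<forall>B\<in>blocks n w. \<forall>i\<in>B. \<forall>j\<in>B. x i = x j) \<and>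
     (\<forall>B\<in>blocks n w. \<forall>i\<in>B. \<forall>j\<in>B. \<forall>k. i < k \<and> k < j \<and> k \<notin> B \<longrightarrow>
        (left_of w k i \<longrightarrow> x k \<le> x i) \<and>
        (\<not> left_of w k i \<longrightarrow> x i \<le> x k))}"

end

theory Submission
  imports Defs
begin

(* The cone C(w) is the set of vectors of V satisfying the "shard conditions" of w
   (equal coordinates on blocks, one-sided inequalities for letters between two
   letters of a block).  Sufficiency of Refinement + Consistency is a direct
   comparison of these conditions.  For necessity we use test vectors: for every
   ascent v(p-1) < v(p) of v, the 0/1 "step vector" that is 1 exactly on the letters
   at positions >= p satisfies the shard conditions of v, so after centring it lies
   in C(v), hence in C(u).  Every letter outside a maximal decreasing run of v is
   separated from the letters of the run by such a step (taken at the left or right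
   end of the run); reading off the shard conditions of u for these step vectors
   yields Refinement and then Consistency. *)

lemma apply_pos: "v permutes S \<Longrightarrow> v (pos v k) = k"
  unfolding pos_def by (rule permutes_inverses(1))

lemma pos_apply: "v permutes S \<Longrightarrow> pos v (v p) = p"
  unfolding pos_def by (rule permutes_inverses(2))

lemma pos_in_letters:
  assumes "v permutes {1..n}" "k \<in> {1..n}"
  shows "pos v k \<in> {1..n}"
  unfolding pos_def using permutes_in_image[OF permutes_inv[OF assms(1)]] assms(2) by simp

lemma mem_run_iff_pos:
  assumes "v permutes S"
  shows "k \<in> v ` {a..b} \<longleftrightarrow> pos v k \<in> {a..b}"
  using apply_pos[OF assms, of k] pos_apply[OF assms] by (metis image_iff)

lemma blocksE:
  assumes "B \<in> blocks n v"
  obtains a b where "max_dec_run n v a b" "B = v ` {a..b}"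
  using assms unfolding blocks_def by blast

lemma blocks_subset_letters:
  assumes "v permutes {1..n}" "B \<in> blocks n v"
  shows "B \<subseteq> {1..n}"
proof -
  obtain a b where run: "max_dec_run n v a b" and B: "B = v ` {a..b}"
    using blocksE[OF assms(2)] .
  have "{a..b} \<subseteq> {1..n}" using run unfolding max_dec_run_def by auto
  then show ?thesis using B permutes_image[OF assms(1)] by blast
qed

text \<open>Every position of an injective word lies in a maximal decreasing run: extend
  to the left up to the nearest ascent and to the right up to the nearest ascent.\<close>
lemma run_through_position:
  assumes inj: "inj_on v {1..n}" and p: "p \<in> {1..n}"
  obtains a b where "max_dec_run n v a b" "a \<le> p" "p \<le> b"
proof -
  define SA where "SA = {q \<in> {1..p}. q = 1 \<or> v (q - 1) < v q}"
  define SB where "SB = {q \<in> {p..n}. q = n \<or> v q < v (q + 1)}"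
  define a where "a = Max SA"
  define b where "b = Min SB"
  have "finite SA" "SA \<noteq> {}" "finite SB" "SB \<noteq> {}"
    unfolding SA_def SB_def using p by auto
  then have aSA: "a \<in> SA" and bSB: "b \<in> SB"
    and a_max: "\<And>q. q \<in> SA \<Longrightarrow> q \<le> a" and b_min: "\<And>q. q \<in> SB \<Longrightarrow> b \<le> q"
    unfolding a_def b_def by simp_all
  have descent: "v (q + 1) < v q" if q: "a \<le> q" "q < b" for q
  proof (rule ccontr)
    assume "\<not> v (q + 1) < v q"
    moreover have "q \<in> {1..n}" "q + 1 \<in> {1..n}" using q aSA bSB unfolding SA_def SB_def by auto
    then have "v q \<noteq> v (q + 1)" using inj by (metis inj_on_contraD n_not_Suc_n Suc_eq_plus1)
    ultimately have asc: "v q < v (q + 1)" by simp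
    show False
    proof (cases "q < p")
      case True
      then have "q + 1 \<in> SA" unfolding SA_def using asc by auto
      then show False using a_max q by fastforce
    next
      case False
      then have "q \<in> SB" using asc q bSB unfolding SB_def by auto
      then show False using b_min q by fastforce
    qed
  qed
  have "max_dec_run n v a b"
    unfolding max_dec_run_def using aSA bSB descent unfolding SA_def SB_def by auto
  moreover have "a \<le> p" "p \<le> b" using aSA bSB unfolding SA_def SB_def by auto
  ultimately show thesis by (rule that)
qed

lemma letter_in_block:
  assumes "v permutes {1..n}" "i \<in> {1..n}"
  obtains B where "B \<in> blocks n v" "i \<in> B"
proof -
  have "inj_on v {1..n}" using assms(1) permutes_inj_on by blast
  then obtain a b where run: "max_dec_run n v a b" "a \<le> pos v i" "pos v i \<le> b"
    using run_through_position pos_in_letters[OF assms] by metis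
  then have "i \<in> v ` {a..b}" using mem_run_iff_pos[OF assms(1)] by simp
  moreover have "v ` {a..b} \<in> blocks n v" unfolding blocks_def using run(1) by blast
  ultimately show thesis using that by blast
qed

definition shard_conditions :: "nat \<Rightarrow> (nat \<Rightarrow> nat) \<Rightarrow> (nat \<Rightarrow> real) \<Rightarrow> bool" where
  "shard_conditions n w x \<longleftrightarrow>
     (\<forall>B\<in>blocks n w. \<forall>i\<in>B. \<forall>j\<in>B. x i = x j) \<and>
     (\<forall>B\<in>blocks n w. \<forall>i\<in>B. \<forall>j\<in>B. \<forall>k. i < k \<and> k < j \<and> k \<notin> B \<longrightarrow>
        (left_of w k i \<longrightarrow> x k \<le> x i) \<and>
        (\<not> left_of w k i \<longrightarrow> x i \<le> x k))"

lemma cone_eq: "cone n w = {x \<in> V n. shard_conditions n w x}"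
  unfolding cone_def shard_conditions_def by simp

lemma shard_eq:
  "shard_conditions n w x \<Longrightarrow> B \<in> blocks n w \<Longrightarrow> i \<in> B \<Longrightarrow> j \<in> B \<Longrightarrow> x i = x j"
  unfolding shard_conditions_def by blast

lemma shard_le_left:
  "shard_conditions n w x \<Longrightarrow> B \<in> blocks n w \<Longrightarrow> i \<in> B \<Longrightarrow> j \<in> B \<Longrightarrow>
   i < k \<Longrightarrow> k < j \<Longrightarrow> k \<notin> B \<Longrightarrow> left_of w k i \<Longrightarrow> x k \<le> x i"
  unfolding shard_conditions_def by blast

lemma shard_le_right:
  "shard_conditions n w x \<Longrightarrow> B \<in> blocks n w \<Longrightarrow> i \<in> B \<Longrightarrow> j \<in> B \<Longrightarrow>
   i < k \<Longrightarrow> k < j \<Longrightarrow> k \<notin> B \<Longrightarrow> \<not> left_of w k i \<Longrightarrow> x i \<le> x k"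
  unfolding shard_conditions_def by blast

definition centre :: "nat \<Rightarrow> (nat \<Rightarrow> real) \<Rightarrow> nat \<Rightarrow> real" where
  "centre n f a = (if a \<in> {1..n} then f a - (\<Sum>i\<in>{1..n}. f i) / n else 0)"

lemma centre_in_V: "centre n f \<in> V n"
proof -
  have "(\<Sum>i\<in>{1..n}. centre n f i) = (\<Sum>i\<in>{1..n}. f i - (\<Sum>i\<in>{1..n}. f i) / n)"
    by (rule sum.cong) (simp_all add: centre_def)
  also have "\<dots> = 0"
    by (cases "n = 0") (simp_all add: sum_subtractf)
  finally show ?thesis unfolding V_def centre_def by simp
qed

text \<open>The shard conditions only compare letters of {1..n}, so they survive centring.\<close>
lemma centre_in_cone:
  assumes "w permutes {1..n}" "shard_conditions n w f"
  shows "centre n f \<in> cone n w"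
proof -
  have letters: "i \<in> {1..n}" if "B \<in> blocks n w" "i \<in> B" for B i
    using blocks_subset_letters[OF assms(1)] that by blast
  have between: "k \<in> {1..n}" if "B \<in> blocks n w" "i \<in> B" "j \<in> B" "i < k" "k < j" for B i j k
    using letters[OF that(1,2)] letters[OF that(1,3)] that(4,5) by auto
  have "shard_conditions n w (centre n f)"
    unfolding shard_conditions_def
  proof (intro conjI ballI allI impI)
    fix B i j assume B: "B \<in> blocks n w" and ij: "i \<in> B" "j \<in> B"
    then show "centre n f i = centre n f j"
      using shard_eq[OF assms(2) B ij] letters[OF B] by (simp add: centre_def)
  next
    fix B i j k assume B: "B \<in> blocks n w" and ij: "i \<in> B" "j \<in> B"
      and k: "i < k \<and> k < j \<and> k \<notin> B" and "left_of w k i"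
    then have "f k \<le> f i" using shard_le_left[OF assms(2) B ij] by blast
    then show "centre n f k \<le> centre n f i"
      using letters[OF B ij(1)] between[OF B ij] k by (simp add: centre_def)
  next
    fix B i j k assume B: "B \<in> blocks n w" and ij: "i \<in> B" "j \<in> B"
      and k: "i < k \<and> k < j \<and> k \<notin> B" and "\<not> left_of w k i"
    then have "f i \<le> f k" using shard_le_right[OF assms(2) B ij] by blast
    then show "centre n f i \<le> centre n f k"
      using letters[OF B ij(1)] between[OF B ij] k by (simp add: centre_def)
  qed
  then show ?thesis using centre_in_V cone_eq by blast
qed

definition step :: "(nat \<Rightarrow> nat) \<Rightarrow> nat \<Rightarrow> nat \<Rightarrow> real" where
  "step v p k = (if p \<le> pos v k then 1 else 0)"

text \<open>At an ascent v(p-1) < v(p) no run of v straddles p, so the step vector is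
  constant on blocks; its monotonicity in the position gives the inequalities.\<close>
lemma step_shard_conditions:
  assumes "v permutes {1..n}" "2 \<le> p" "v (p - 1) < v p"
  shows "shard_conditions n v (step v p)"
  unfolding shard_conditions_def
proof (intro conjI ballI allI impI)
  fix B i j assume B: "B \<in> blocks n v" and "i \<in> B" "j \<in> B"
  obtain a b where run: "max_dec_run n v a b" and B_eq: "B = v ` {a..b}" using blocksE[OF B] .
  have "pos v i \<in> {a..b}" "pos v j \<in> {a..b}"
    using \<open>i \<in> B\<close> \<open>j \<in> B\<close> B_eq mem_run_iff_pos[OF assms(1)] by auto
  moreover have "\<not> (a \<le> p - 1 \<and> p \<le> b)"
  proof
    assume "a \<le> p - 1 \<and> p \<le> b"
    then have "v (p - 1 + 1) < v (p - 1)" using run unfolding max_dec_run_def by auto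
    then show False using assms(2,3) by simp
  qed
  ultimately show "step v p i = step v p j" unfolding step_def by auto
qed (auto simp: step_def left_of_def)

text \<open>A letter y outside a maximal run of v is separated from every letter x of the
  run by the step at the left end (if y lies to the left) or just after the right
  end (if y lies to the right) of the run; both are ascents by maximality.\<close>
lemma step_separates:
  assumes run: "max_dec_run n v a b"
    and x: "pos v x \<in> {a..b}" and y: "pos v y \<notin> {a..b}" "pos v y \<in> {1..n}"
  obtains p where "2 \<le> p" "v (p - 1) < v p" "step v p y \<noteq> step v p x"
    "step v p y < step v p x \<longleftrightarrow> pos v y < pos v x"
proof (cases "pos v y < a")
  case True
  then have "2 \<le> a" "v (a - 1) < v a" using run y(2) unfolding max_dec_run_def by auto
  then show thesis using that[of a] True x by (auto simp: step_def)
next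
  case False
  then have right: "b < pos v y" using y(1) by auto
  then have "2 \<le> b + 1" "v (b + 1 - 1) < v (b + 1)"
    using run y(2) unfolding max_dec_run_def by auto
  then show thesis using that[of "b + 1"] right x by (auto simp: step_def)
qed

lemma step_shard_conditions_coarser:
  assumes "u permutes {1..n}" "v permutes {1..n}" "cone n v \<subseteq> cone n u"
    and "2 \<le> p" "v (p - 1) < v p"
  shows "shard_conditions n u (centre n (step v p))"
  using centre_in_cone[OF assms(2) step_shard_conditions[OF assms(2,4,5)]] assms(3)
  by (auto simp: cone_eq)

lemma centre_le_iff:
  "i \<in> {1..n} \<Longrightarrow> k \<in> {1..n} \<Longrightarrow> centre n f k \<le> centre n f i \<longleftrightarrow> f k \<le> f i"
  by (simp add: centre_def)

text \<open>Refinement: fix a letter of a block B of u and its block B' of v; a letter of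
  B outside B' would be separated from it by an ascent step vector of v, which
  must nevertheless be constant on B.\<close>
lemma refinement_necessary:
  assumes "u permutes {1..n}" "v permutes {1..n}" "cone n v \<subseteq> cone n u"
    and B: "B \<in> blocks n u"
  shows "\<exists>B'\<in>blocks n v. B \<subseteq> B'"
proof -
  obtain a b where "max_dec_run n u a b" "B = u ` {a..b}" using blocksE[OF B] .
  then have x: "u a \<in> B" unfolding max_dec_run_def by auto
  have letters: "B \<subseteq> {1..n}" using blocks_subset_letters[OF assms(1) B] .
  obtain B' where B': "B' \<in> blocks n v" "u a \<in> B'"
    using letter_in_block[OF assms(2)] x letters by blast
  obtain a' b' where run': "max_dec_run n v a' b'" and B'_eq: "B' = v ` {a'..b'}"
    using blocksE[OF B'(1)] .
  have "y \<in> B'" if y: "y \<in> B" for y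
  proof (rule ccontr)
    assume "y \<notin> B'"
    have in_run: "pos v (u a) \<in> {a'..b'}" and out_run: "pos v y \<notin> {a'..b'}"
      using B'(2) \<open>y \<notin> B'\<close> B'_eq mem_run_iff_pos[OF assms(2)] by auto
    have y_letter: "y \<in> {1..n}" and x_letter: "u a \<in> {1..n}" using letters x y by auto
    obtain p where p: "2 \<le> p" "v (p - 1) < v p" "step v p y \<noteq> step v p (u a)"
      using step_separates[OF run' in_run out_run pos_in_letters[OF assms(2) y_letter]] by metis
    have "centre n (step v p) (u a) = centre n (step v p) y"
      using shard_eq[OF step_shard_conditions_coarser[OF assms(1-3) p(1,2)] B x y] .
    then show False using p(3) x_letter y_letter by (simp add: centre_def)
  qed
  then show ?thesis using B'(1) by blast
qed

text \<open>Consistency: if k is not in the block B' of v containing B, an ascent step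
  vector of v separates k from i, and the shard inequality of u between k and i
  forces k to lie on the same side of i in v as in u.\<close>
lemma consistency_necessary:
  assumes "u permutes {1..n}" "v permutes {1..n}" "cone n v \<subseteq> cone n u"
    and B: "B \<in> blocks n u" and ij: "i \<in> B" "j \<in> B" and k: "i < k" "k < j" "k \<notin> B"
  shows "(\<exists>B'\<in>blocks n v. i \<in> B' \<and> j \<in> B' \<and> k \<in> B') \<or> (left_of v k i \<longleftrightarrow> left_of u k i)"
proof -
  obtain B' where B': "B' \<in> blocks n v" "B \<subseteq> B'"
    using refinement_necessary[OF assms(1-3) B] by blast
  obtain a' b' where run': "max_dec_run n v a' b'" and B'_eq: "B' = v ` {a'..b'}"
    using blocksE[OF B'(1)] .
  have i: "i \<in> {1..n}" and j: "j \<in> {1..n}" using blocks_subset_letters[OF assms(1) B] ij by auto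
  then have k_letter: "k \<in> {1..n}" using k by auto
  show ?thesis
  proof (cases "k \<in> B'")
    case True
    then show ?thesis using B' ij by blast
  next
    case False
    have in_run: "pos v i \<in> {a'..b'}" and out_run: "pos v k \<notin> {a'..b'}"
      using B'(2) ij(1) False mem_run_iff_pos[OF assms(2)] unfolding B'_eq by blast+
    obtain p where p: "2 \<le> p" "v (p - 1) < v p" "step v p k \<noteq> step v p i"
      "step v p k < step v p i \<longleftrightarrow> pos v k < pos v i"
      using step_separates[OF run' in_run out_run pos_in_letters[OF assms(2) k_letter]] by metis
    note shard_u = step_shard_conditions_coarser[OF assms(1-3) p(1,2)]
    have "left_of u k i \<longrightarrow> step v p k \<le> step v p i"
      using shard_le_left[OF shard_u B ij k] centre_le_iff[OF i k_letter] by blast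
    moreover have "\<not> left_of u k i \<longrightarrow> step v p i \<le> step v p k"
      using shard_le_right[OF shard_u B ij k] centre_le_iff[OF k_letter i] by blast
    ultimately have "left_of v k i \<longleftrightarrow> left_of u k i"
      using p(3,4) unfolding left_of_def by auto
    then show ?thesis by blast
  qed
qed

text \<open>Under Refinement and Consistency, the shard conditions of v imply those of u:
  a letter k between two letters of a block of u either shares a block of v with
  them (then x is constant on them) or sits on the same side in v as in u.\<close>
lemma shard_conditions_transfer:
  assumes refine: "\<forall>B\<in>blocks n u. \<exists>B'\<in>blocks n v. B \<subseteq> B'"
    and consistent: "\<forall>B\<in>blocks n u. \<forall>i\<in>B. \<forall>j\<in>B. \<forall>k. i < k \<and> k < j \<and> k \<notin> B \<longrightarrow>
        (\<exists>B'\<in>blocks n v. i \<in> B' \<and> j \<in> B' \<and> k \<in> B') \<or> (left_of v k i \<longleftrightarrow> left_of u k i)"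
    and shard_v: "shard_conditions n v x"
  shows "shard_conditions n u x"
  unfolding shard_conditions_def
proof (intro conjI ballI allI impI)
  fix B i j assume B: "B \<in> blocks n u" and "i \<in> B" "j \<in> B"
  obtain B' where "B' \<in> blocks n v" "B \<subseteq> B'" using refine B by blast
  then show "x i = x j" using shard_eq[OF shard_v] \<open>i \<in> B\<close> \<open>j \<in> B\<close> by blast
next
  fix B i j k assume B: "B \<in> blocks n u" and ij: "i \<in> B" "j \<in> B"
    and k: "i < k \<and> k < j \<and> k \<notin> B"
  obtain B' where B': "B' \<in> blocks n v" "B \<subseteq> B'" using refine B by blast
  have iB': "i \<in> B'" and jB': "j \<in> B'" using B'(2) ij by blast+
  have "(left_of u k i \<longrightarrow> x k \<le> x i) \<and> (\<not> left_of u k i \<longrightarrow> x i \<le> x k)"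
  proof (cases "\<exists>B''\<in>blocks n v. i \<in> B'' \<and> k \<in> B''")
    case True
    then obtain B'' where "B'' \<in> blocks n v" "i \<in> B''" "k \<in> B''" by blast
    then have "x k = x i" using shard_eq[OF shard_v] by blast
    then show ?thesis by simp
  next
    case False
    then have same_side: "left_of v k i \<longleftrightarrow> left_of u k i"
      using consistent[rule_format, OF B ij k] by blast
    have "k \<notin> B'" using False B'(1) iB' by blast
    then have "left_of v k i \<longrightarrow> x k \<le> x i" "\<not> left_of v k i \<longrightarrow> x i \<le> x k"
      using shard_le_left[OF shard_v B'(1) iB' jB'] shard_le_right[OF shard_v B'(1) iB' jB'] k
      by simp_all
    then show ?thesis using same_side by simp
  qed
  then show "left_of u k i \<Longrightarrow> x k \<le> x i" "\<not> left_of u k i \<Longrightarrow> x i \<le> x k" by auto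
qed

theorem mainTheorem6:
  fixes n :: nat and u v :: "nat \<Rightarrow> nat"
  assumes "u permutes {1..n}" and "v permutes {1..n}"
  shows "cone n v \<subseteq> cone n u \<longleftrightarrow>
    ((\<forall>B\<in>blocks n u. \<exists>B'\<in>blocks n v. B \<subseteq> B') \<and>
     (\<forall>B\<in>blocks n u. \<forall>i\<in>B. \<forall>j\<in>B. \<forall>k. i < k \<and> k < j \<and> k \<notin> B \<longrightarrow>
        (\<exists>B'\<in>blocks n v. i \<in> B' \<and> j \<in> B' \<and> k \<in> B') \<or>
        (left_of v k i \<longleftrightarrow> left_of u k i)))"
  (is "?shard_order \<longleftrightarrow> ?refinement \<and> ?consistency")
proof
  assume sub: ?shard_order
  show "?refinement \<and> ?consistency"
  proof (intro conjI ballI allI impI)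
    fix B assume "B \<in> blocks n u"
    then show "\<exists>B'\<in>blocks n v. B \<subseteq> B'" by (rule refinement_necessary[OF assms sub])
  next
    fix B i j k assume "B \<in> blocks n u" "i \<in> B" "j \<in> B" and k: "i < k \<and> k < j \<and> k \<notin> B"
    then show "(\<exists>B'\<in>blocks n v. i \<in> B' \<and> j \<in> B' \<and> k \<in> B') \<or> (left_of v k i \<longleftrightarrow> left_of u k i)"
      using consistency_necessary[OF assms sub] k by simp
  qed
next
  assume "?refinement \<and> ?consistency"
  then have "shard_conditions n v x \<Longrightarrow> shard_conditions n u x" for x
    using shard_conditions_transfer[of n u v x] by simp
  then show ?shard_order unfolding cone_eq by blast
qed

end
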